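(* Let $\Delta$ be a compact Hausdorff space, $u\colon\Delta\to\mathbb R$ continuous, $v\colon\Delta\to\mathbb R$ upper semicontinuous, $f(\alpha)=\max\{v(\bm w):u(\bm w)=\alpha\}$ (with $\max\varnothing=-\infty$) and $\tau(q)=\min_{\bm w\in\Delta}\{q\,u(\bm w)-v(\bm w)\}$. Then the limits $\partial^-\tau(\infty)=\lim_{q\to\infty}\tau(q)/q$ and $\partial^+\tau(-\infty)=\lim_{q\to-\infty}\tau(q)/q$ exist and are finite, and $\tau$ is supported at $(\infty,\partial^-\tau(\infty))$ and at $(-\infty,\partial^+\tau(-\infty))$. In particular $\tau^*(\partial^-\tau(\infty))=f(\partial^-\tau(\infty))$ and $\tau^*(\partial^+\tau(-\infty))=f(\partial^+\tau(-\infty))$.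
   Context: Concave conjugate: $\tau^*(\alpha)=\inf_{q\in\mathbb R}(q\alpha-\tau(q))$. $\tau$ is supported at $(\infty,a)$ (with $a=\partial^-\tau(\infty)$) if there is $\bm w\in\Delta$ such that the line $q\mapsto q\,u(\bm w)-v(\bm w)$ is the affine asymptote of $\tau$ as $q\to\infty$, i.e. $\tau(q)-(q\,u(\bm w)-v(\bm w))\to0$ as $q\to\infty$; similarly for $(-\infty,\partial^+\tau(-\infty))$ as $q\to-\infty$. *)

theory Defs
  imports "HOL-Analysis.Analysis"
begin

definition usc_map :: "'a topology \<Rightarrow> ('a \<Rightarrow> real) \<Rightarrow> bool" where
  "usc_map X v \<longleftrightarrow> (\<forall>a. openin X {x \<in> topspace X. v x < a})"

text \<open>f(alpha) = max of v over the level set u = alpha, with max of the empty set = -infinity.\<close>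
definition fspec :: "'a topology \<Rightarrow> ('a \<Rightarrow> real) \<Rightarrow> ('a \<Rightarrow> real) \<Rightarrow> real \<Rightarrow> ereal" where
  "fspec X u v \<alpha> = Sup ((\<lambda>w. ereal (v w)) ` {w \<in> topspace X. u w = \<alpha>})"

definition tau :: "'a topology \<Rightarrow> ('a \<Rightarrow> real) \<Rightarrow> ('a \<Rightarrow> real) \<Rightarrow> real \<Rightarrow> real" where
  "tau X u v q = Inf ((\<lambda>w. q * u w - v w) ` topspace X)"

definition conj_concave :: "(real \<Rightarrow> real) \<Rightarrow> real \<Rightarrow> ereal" where
  "conj_concave t \<alpha> = Inf (range (\<lambda>q. ereal (q * \<alpha> - t q)))"

text \<open>tau is supported at (infinity, .) / (-infinity, .): some point w gives the affine asymptote.\<close>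
definition supported_at_top :: "'a topology \<Rightarrow> ('a \<Rightarrow> real) \<Rightarrow> ('a \<Rightarrow> real) \<Rightarrow> (real \<Rightarrow> real) \<Rightarrow> bool" where
  "supported_at_top X u v t \<longleftrightarrow>
     (\<exists>w \<in> topspace X. ((\<lambda>q. t q - (q * u w - v w)) \<longlongrightarrow> 0) at_top)"

definition supported_at_bot :: "'a topology \<Rightarrow> ('a \<Rightarrow> real) \<Rightarrow> ('a \<Rightarrow> real) \<Rightarrow> (real \<Rightarrow> real) \<Rightarrow> bool" where
  "supported_at_bot X u v t \<longleftrightarrow>
     (\<exists>w \<in> topspace X. ((\<lambda>q. t q - (q * u w - v w)) \<longlongrightarrow> 0) at_bot)"

end

theory Submission
  imports Defs
begin

text \<open>
  Let \<open>w\<^sub>0\<close> minimise \<open>u\<close> and, among the minimisers, maximise \<open>v\<close>; then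
  \<open>\<tau>(q) \<le> q u(w\<^sub>0) - v(w\<^sub>0)\<close> for every \<open>q\<close>. Conversely, by upper semicontinuity the points
  where \<open>v \<ge> v(w\<^sub>0) + \<epsilon>\<close> form a compact set on which \<open>u\<close> stays a fixed distance
  \<open>\<delta> > 0\<close> above its minimum, so for \<open>q \<delta>\<close> larger than the oscillation of \<open>v\<close> these
  points cannot bring \<open>\<tau>(q)\<close> below \<open>q u(w\<^sub>0) - v(w\<^sub>0) - \<epsilon>\<close>. Hence the line through
  \<open>w\<^sub>0\<close> is the asymptote of \<open>\<tau>\<close> at \<open>+\<infinity>\<close>, its slope is \<open>\<partial>\<^sup>-\<tau>(\<infinity>)\<close>, and since
  it majorises \<open>\<tau>\<close> the conjugate at that slope is \<open>v(w\<^sub>0) = f(u(w\<^sub>0))\<close>.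
  Replacing \<open>u\<close> by \<open>-u\<close> gives the statement at \<open>-\<infinity>\<close>.
\<close>

lemma usc_map_attains_max:
  assumes "usc_map X v" and "compactin X K" and "K \<noteq> {}"
  shows "\<exists>x\<in>K. \<forall>y\<in>K. v y \<le> v x"
proof (rule ccontr)
  assume "\<not> ?thesis"
  then have below: "\<forall>x\<in>K. \<exists>y\<in>K. v x < v y"
    by (auto simp: not_le)
  define U where "U = (\<lambda>y. {x \<in> topspace X. v x < v y}) ` K"
  have "\<And>S. S \<in> U \<Longrightarrow> openin X S"
    using assms(1) by (auto simp: usc_map_def U_def)
  moreover have "K \<subseteq> \<Union>U"
    using below compactin_subset_topspace[OF assms(2)] unfolding U_def by blast
  ultimately obtain F where F: "finite F" "F \<subseteq> U" "K \<subseteq> \<Union>F"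
    using compactinD assms(2) by metis
  from F obtain G where G: "G \<subseteq> K" "finite G" "F = (\<lambda>y. {x \<in> topspace X. v x < v y}) ` G"
    unfolding U_def using finite_subset_image[of F] by blast
  have cover: "\<forall>x\<in>K. \<exists>y\<in>G. v x < v y"
    using F(3) unfolding G(3) by blast
  then have "G \<noteq> {}"
    using assms(3) by blast
  then obtain g where "g \<in> G" "Max (v ` G) = v g"
    using obtains_MAX[OF G(2)] by metis
  moreover from this G(1) cover obtain y where "y \<in> G" "v g < v y"
    by blast
  ultimately show False
    using G(2) Max_ge[of "v ` G" "v y"] by auto
qed

lemma closedin_usc_superlevel:
  assumes "usc_map X v"
  shows "closedin X {x \<in> topspace X. c \<le> v x}"
proof -
  have "{x \<in> topspace X. c \<le> v x} = topspace X - {x \<in> topspace X. v x < c}"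
    by auto
  then show ?thesis
    using assms by (simp add: usc_map_def closedin_diff)
qed

context
  fixes X :: "'a topology" and u v :: "'a \<Rightarrow> real"
  assumes compact: "compact_space X"
    and cont_u: "continuous_map X euclideanreal u"
    and usc_v: "usc_map X v"
begin

lemma compact_image_u: "compact (u ` topspace X)"
  using image_compactin[OF compact[unfolded compact_space_def] cont_u] by simp

lemma compactin_superlevel: "compactin X {x \<in> topspace X. c \<le> v x}"
  using closedin_compact_space[OF compact closedin_usc_superlevel[OF usc_v]] .

lemma usc_bounded_above: "\<exists>M. \<forall>w\<in>topspace X. v w \<le> M"
proof (cases "topspace X = {}")
  case False
  then show ?thesis
    using usc_map_attains_max[OF usc_v] compact by (auto simp: compact_space_def)
qed simp

lemma bdd_below_tau_image: "bdd_below ((\<lambda>w. q * u w - v w) ` topspace X)"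
proof -
  obtain B where B: "\<And>w. w \<in> topspace X \<Longrightarrow> \<bar>u w\<bar> \<le> B"
    using compact_imp_bounded[OF compact_image_u] by (auto simp: bounded_iff)
  obtain M where M: "\<And>w. w \<in> topspace X \<Longrightarrow> v w \<le> M"
    using usc_bounded_above by blast
  have "- \<bar>q\<bar> * B - M \<le> q * u w - v w" if "w \<in> topspace X" for w
  proof -
    have "\<bar>q * u w\<bar> \<le> \<bar>q\<bar> * B"
      using B[OF that] by (simp add: abs_mult mult_left_mono)
    then show ?thesis
      using M[OF that] abs_le_D2 by fastforce
  qed
  then show ?thesis
    by (auto simp: bdd_below_def)
qed

lemma tau_le: "w \<in> topspace X \<Longrightarrow> tau X u v q \<le> q * u w - v w"
  unfolding tau_def by (auto intro: cInf_lower bdd_below_tau_image)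

lemma exists_argmin_u_max_v:
  assumes "topspace X \<noteq> {}"
  obtains w0 where "w0 \<in> topspace X" "\<And>w. w \<in> topspace X \<Longrightarrow> u w0 \<le> u w"
    "\<And>w. w \<in> topspace X \<Longrightarrow> u w = u w0 \<Longrightarrow> v w \<le> v w0"
proof -
  obtain a where a: "a \<in> u ` topspace X" "\<And>y. y \<in> u ` topspace X \<Longrightarrow> a \<le> y"
    using compact_attains_inf[OF compact_image_u] assms by auto
  define A where "A = {w \<in> topspace X. u w \<in> {a}}"
  have "closedin X A"
    unfolding A_def by (rule closedin_continuous_map_preimage[OF cont_u]) simp
  then have "compactin X A"
    using compact closedin_compact_space by blast
  moreover have "A \<noteq> {}"
    using a(1) by (auto simp: A_def)
  ultimately obtain w0 where "w0 \<in> A" "\<forall>w\<in>A. v w \<le> v w0"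
    using usc_map_attains_max[OF usc_v] by blast
  then show ?thesis
    using that a(2) by (auto simp: A_def)
qed

lemma superlevel_gap:
  assumes w0: "w0 \<in> topspace X" "\<And>w. w \<in> topspace X \<Longrightarrow> u w0 \<le> u w"
    "\<And>w. w \<in> topspace X \<Longrightarrow> u w = u w0 \<Longrightarrow> v w \<le> v w0"
    and "e > 0"
  obtains \<delta> where "\<delta> > 0" "\<And>w. w \<in> topspace X \<Longrightarrow> v w0 + e \<le> v w \<Longrightarrow> u w0 + \<delta> \<le> u w"
proof -
  define K where "K = {w \<in> topspace X. v w0 + e \<le> v w}"
  show ?thesis
  proof (cases "K = {}")
    case True
    then show ?thesis
      using that[of 1] by (auto simp: K_def)
  next
    case False
    have "compact (u ` K)"
      using image_compactin[OF compactin_superlevel cont_u] by (simp add: K_def)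
    with False obtain k where k: "k \<in> K" "\<And>w. w \<in> K \<Longrightarrow> u k \<le> u w"
      using compact_attains_inf[of "u ` K"] by auto
    have "u k \<noteq> u w0"
      using k(1) w0(3) \<open>e > 0\<close> by (force simp: K_def)
    then have "u k > u w0"
      using k(1) w0(2) by (force simp: K_def)
    then show ?thesis
      using that[of "u k - u w0"] k(2) by (auto simp: K_def)
  qed
qed

lemma eventually_tau_ge_at_top:
  assumes w0: "w0 \<in> topspace X" "\<And>w. w \<in> topspace X \<Longrightarrow> u w0 \<le> u w"
    "\<And>w. w \<in> topspace X \<Longrightarrow> u w = u w0 \<Longrightarrow> v w \<le> v w0"
    and "e > 0"
  shows "\<forall>\<^sub>F q in at_top. q * u w0 - v w0 - e \<le> tau X u v q"
proof -
  obtain \<delta> where "\<delta> > 0" and gap: "\<And>w. w \<in> topspace X \<Longrightarrow> v w0 + e \<le> v w \<Longrightarrow> u w0 + \<delta> \<le> u w"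
    using superlevel_gap[OF w0 \<open>e > 0\<close>] by blast
  obtain M where M: "\<And>w. w \<in> topspace X \<Longrightarrow> v w \<le> M"
    using usc_bounded_above by blast
  have "q * u w0 - v w0 - e \<le> tau X u v q" if q: "max 0 ((M - v w0) / \<delta>) \<le> q" for q
    unfolding tau_def
  proof (rule cInf_greatest)
    show "(\<lambda>w. q * u w - v w) ` topspace X \<noteq> {}"
      using w0(1) by blast
  next
    fix y assume "y \<in> (\<lambda>w. q * u w - v w) ` topspace X"
    then obtain w where w: "w \<in> topspace X" and y: "y = q * u w - v w"
      by blast
    have "q \<ge> 0" and "M - v w0 \<le> q * \<delta>"
      using q \<open>\<delta> > 0\<close> by (auto simp: pos_divide_le_eq)
    have "q * u w0 \<le> q * u w"
      using w0(2)[OF w] \<open>q \<ge> 0\<close> by (simp add: mult_left_mono)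
    moreover have "q * (u w0 + \<delta>) \<le> q * u w" if "v w0 + e \<le> v w"
      using gap[OF w that] \<open>q \<ge> 0\<close> by (simp add: mult_left_mono)
    ultimately show "q * u w0 - v w0 - e \<le> y"
      using M[OF w] \<open>M - v w0 \<le> q * \<delta>\<close> \<open>e > 0\<close> unfolding y
      by (cases "v w0 + e \<le> v w") (auto simp: algebra_simps)
  qed
  then show ?thesis
    unfolding eventually_at_top_linorder by blast
qed

lemma tau_affine_asymptote_at_top:
  assumes "topspace X \<noteq> {}"
  obtains w0 where "w0 \<in> topspace X" "\<And>w. w \<in> topspace X \<Longrightarrow> u w = u w0 \<Longrightarrow> v w \<le> v w0"
    "((\<lambda>q. tau X u v q - (q * u w0 - v w0)) \<longlongrightarrow> 0) at_top"
proof -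
  obtain w0 where w0: "w0 \<in> topspace X" "\<And>w. w \<in> topspace X \<Longrightarrow> u w0 \<le> u w"
    "\<And>w. w \<in> topspace X \<Longrightarrow> u w = u w0 \<Longrightarrow> v w \<le> v w0"
    using exists_argmin_u_max_v[OF assms] by metis
  have "((\<lambda>q. tau X u v q - (q * u w0 - v w0)) \<longlongrightarrow> 0) at_top"
  proof (rule tendstoI)
    fix e :: real assume "e > 0"
    have "\<forall>\<^sub>F q in at_top. q * u w0 - v w0 - e / 2 \<le> tau X u v q"
      using \<open>e > 0\<close> by (intro eventually_tau_ge_at_top[OF w0(1,2)] w0(3)) simp_all
    then show "\<forall>\<^sub>F q in at_top. dist (tau X u v q - (q * u w0 - v w0)) 0 < e"
      by (rule eventually_mono) (use tau_le[OF w0(1)] \<open>e > 0\<close> in \<open>auto simp: dist_real_def\<close>)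
  qed
  then show ?thesis
    using that w0 by blast
qed

end

lemma tau_uminus: "tau X (\<lambda>w. - u w) v q = tau X u v (- q)"
  unfolding tau_def by simp

lemma tau_affine_asymptote_at_bot:
  assumes "compact_space X" "continuous_map X euclideanreal u" "usc_map X v" "topspace X \<noteq> {}"
  obtains w1 where "w1 \<in> topspace X" "\<And>w. w \<in> topspace X \<Longrightarrow> u w = u w1 \<Longrightarrow> v w \<le> v w1"
    "((\<lambda>q. tau X u v q - (q * u w1 - v w1)) \<longlongrightarrow> 0) at_bot"
proof -
  have "continuous_map X euclideanreal (\<lambda>w. - u w)"
    using assms(2) by simp
  then obtain w1 where "w1 \<in> topspace X" "\<And>w. w \<in> topspace X \<Longrightarrow> - u w = - u w1 \<Longrightarrow> v w \<le> v w1"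
    and lim: "((\<lambda>q. tau X (\<lambda>w. - u w) v q - (q * - u w1 - v w1)) \<longlongrightarrow> 0) at_top"
    using tau_affine_asymptote_at_top[OF assms(1) _ assms(3,4)] by blast
  moreover have "((\<lambda>q. tau X u v q - (q * u w1 - v w1)) \<longlongrightarrow> 0) at_bot"
    unfolding filterlim_at_bot_mirror using lim by (simp add: tau_uminus)
  ultimately show ?thesis
    using that by simp
qed

lemma tendsto_divide_of_affine_asymptote:
  fixes t :: "real \<Rightarrow> real"
  assumes asym: "((\<lambda>q. t q - (q * c - d)) \<longlongrightarrow> 0) F" and F: "F \<le> at_infinity"
  shows "((\<lambda>q. t q / q) \<longlongrightarrow> c) F"
proof -
  have inf: "filterlim (\<lambda>q. q) at_infinity F"
    using F by (simp add: filterlim_def)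
  have "\<forall>\<^sub>F q in at_infinity. q \<noteq> (0::real)"
    by (auto simp: eventually_at_infinity intro!: exI[of _ 1])
  then have "\<forall>\<^sub>F q in F. q \<noteq> 0"
    using F filter_leD by blast
  then have "\<forall>\<^sub>F q in F. c + (t q - (q * c - d)) / q - d / q = t q / q"
    by eventually_elim (simp add: field_simps)
  moreover have "((\<lambda>q. c + (t q - (q * c - d)) / q - d / q) \<longlongrightarrow> c + 0 - 0) F"
    by (intro tendsto_intros tendsto_divide_0[OF asym inf] tendsto_divide_0[OF tendsto_const inf])
  ultimately show ?thesis
    by (simp add: tendsto_cong)
qed

lemma conj_concave_eq_of_affine_asymptote:
  fixes t :: "real \<Rightarrow> real"
  assumes le: "\<And>q. t q \<le> q * c - d" and asym: "((\<lambda>q. t q - (q * c - d)) \<longlongrightarrow> 0) F"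
    and "F \<noteq> bot"
  shows "conj_concave t c = ereal d"
proof (rule antisym)
  have "((\<lambda>q. d - (t q - (q * c - d))) \<longlongrightarrow> d - 0) F"
    by (intro tendsto_intros asym)
  then have "((\<lambda>q. ereal (q * c - t q)) \<longlongrightarrow> ereal d) F"
    by (intro tendsto_ereal) (simp add: algebra_simps)
  moreover have "\<forall>\<^sub>F q in F. conj_concave t c \<le> ereal (q * c - t q)"
    unfolding conj_concave_def by (intro always_eventually allI INF_lower) simp
  ultimately show "conj_concave t c \<le> ereal d"
    using tendsto_le[OF \<open>F \<noteq> bot\<close>] tendsto_const by blast
next
  show "ereal d \<le> conj_concave t c"
    unfolding conj_concave_def using le by (intro INF_greatest) (simp add: algebra_simps)
qed

lemma fspec_eq_level_max:
  assumes "w0 \<in> topspace X" "\<And>w. w \<in> topspace X \<Longrightarrow> u w = u w0 \<Longrightarrow> v w \<le> v w0"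
  shows "fspec X u v (u w0) = ereal (v w0)"
  unfolding fspec_def using assms by (intro antisym SUP_least SUP_upper) auto

theorem mainTheorem10:
  fixes X :: "'a topology" and u v :: "'a \<Rightarrow> real"
  assumes "compact_space X" and "Hausdorff_space X" and "topspace X \<noteq> {}"
    and "continuous_map X euclideanreal u"
    and "usc_map X v"
  shows "\<exists>a b :: real.
           ((\<lambda>q. tau X u v q / q) \<longlongrightarrow> a) at_top
         \<and> ((\<lambda>q. tau X u v q / q) \<longlongrightarrow> b) at_bot
         \<and> supported_at_top X u v (tau X u v)
         \<and> supported_at_bot X u v (tau X u v)
         \<and> conj_concave (tau X u v) a = fspec X u v a
         \<and> conj_concave (tau X u v) b = fspec X u v b"
proof -
  obtain w0 where w0: "w0 \<in> topspace X" "\<And>w. w \<in> topspace X \<Longrightarrow> u w = u w0 \<Longrightarrow> v w \<le> v w0"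
    and top: "((\<lambda>q. tau X u v q - (q * u w0 - v w0)) \<longlongrightarrow> 0) at_top"
    using tau_affine_asymptote_at_top[OF assms(1,4,5,3)] by blast
  obtain w1 where w1: "w1 \<in> topspace X" "\<And>w. w \<in> topspace X \<Longrightarrow> u w = u w1 \<Longrightarrow> v w \<le> v w1"
    and bot: "((\<lambda>q. tau X u v q - (q * u w1 - v w1)) \<longlongrightarrow> 0) at_bot"
    using tau_affine_asymptote_at_bot[OF assms(1,4,5,3)] by blast
  note tau_le = tau_le[OF assms(1,4,5)]
  show ?thesis
  proof (intro exI conjI)
    show "((\<lambda>q. tau X u v q / q) \<longlongrightarrow> u w0) at_top"
      and "((\<lambda>q. tau X u v q / q) \<longlongrightarrow> u w1) at_bot"
      using tendsto_divide_of_affine_asymptote top bot at_top_le_at_infinity at_bot_le_at_infinity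
      by blast+
    show "supported_at_top X u v (tau X u v)" and "supported_at_bot X u v (tau X u v)"
      unfolding supported_at_top_def supported_at_bot_def using w0(1) w1(1) top bot by blast+
    show "conj_concave (tau X u v) (u w0) = fspec X u v (u w0)"
      using conj_concave_eq_of_affine_asymptote[OF tau_le[OF w0(1)] top]
        fspec_eq_level_max[of w0 X u v, OF w0] by simp
    show "conj_concave (tau X u v) (u w1) = fspec X u v (u w1)"
      using conj_concave_eq_of_affine_asymptote[OF tau_le[OF w1(1)] bot]
        fspec_eq_level_max[of w1 X u v, OF w1] by simp
  qed
qed

end
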